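(* Let $s>0$ and let $(V_s,\oplus,\otimes)$ be the Möbius gyrovector space on the open disc $V_s=\{z\in\mathbb{C}:|z|<s\}$. Let $A,B,C,D\in V_s$ be the vertices of a gyroquadrilateral $ABCD$. Let $l$ be a gyroline passing through none of the points $A,B,C,D$, such that $l$ meets the gyroline $AB$ at $X$, the gyroline $BC$ at $Y$, the gyroline $CD$ at $Z$, and the gyroline $DA$ at $W$. Then $$\frac{(AX)_\gamma}{(BX)_\gamma}\cdot\frac{(BY)_\gamma}{(CY)_\gamma}\cdot\frac{(CZ)_\gamma}{(DZ)_\gamma}\cdot\frac{(DW)_\gamma}{(AW)_\gamma}=1.$$
   Context: Möbius addition on $V_s$ is $a\oplus b=\dfrac{a+b}{1+\bar a b/s^2}$, with $\ominus a=-a$ and $a\ominus b=a\oplus(-b)$; for $s=1$ this is the Poincaré disc model of hyperbolic geometry. For points $P,Q\in V_s$, the gyrolength (hyperbolic gyrodistance) $PQ$ is $|\ominus P\oplus Q|$. Gyrolines are the geodesics of the Poincaré disc model, i.e. the sets $\{A\oplus(\ominus A\oplus B)\otimes t: t\in\mathbb{R}\}$ for distinct $A,B$ (the gyroline $AB$); equivalently, diameters of the disc and circular arcs in the disc orthogonal to its boundary. For a gyrolength $v\in(-s,s)$, the notation $v_\gamma$ means $v_\gamma=\dfrac{v}{1-\frac{v^2}{s^2}}$; thus e.g. $(AX)_\gamma$ is this quantity for $v$ the gyrolength $AX$. *)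

theory Defs
  imports "HOL-Analysis.Analysis"
begin

definition disc :: "real \<Rightarrow> complex set" where
  "disc s = {z. cmod z < s}"

definition mobius_add :: "real \<Rightarrow> complex \<Rightarrow> complex \<Rightarrow> complex" where
  "mobius_add s a b = (a + b) / (1 + cnj a * b / (complex_of_real s)\<^sup>2)"

definition mobius_scal :: "real \<Rightarrow> real \<Rightarrow> complex \<Rightarrow> complex" where
  "mobius_scal s r a =
     (if a = 0 then 0
      else complex_of_real (s * tanh (r * artanh (cmod a / s))) * (a / complex_of_real (cmod a)))"

definition gyroline :: "real \<Rightarrow> complex \<Rightarrow> complex \<Rightarrow> complex set" where
  "gyroline s A B = {mobius_add s A (mobius_scal s t (mobius_add s (- A) B)) | t. True}"

definition gyrodist :: "real \<Rightarrow> complex \<Rightarrow> complex \<Rightarrow> real" where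
  "gyrodist s P Q = cmod (mobius_add s (- P) Q)"

definition gamma_len :: "real \<Rightarrow> real \<Rightarrow> real" where
  "gamma_len s v = v / (1 - v\<^sup>2 / s\<^sup>2)"

definition gyroquadrilateral :: "real \<Rightarrow> complex \<Rightarrow> complex \<Rightarrow> complex \<Rightarrow> complex \<Rightarrow> bool" where
  "gyroquadrilateral s A B C D \<longleftrightarrow>
     A \<in> disc s \<and> B \<in> disc s \<and> C \<in> disc s \<and> D \<in> disc s \<and>
     distinct [A, B, C, D] \<and>
     C \<notin> gyroline s A B \<and> D \<notin> gyroline s A B \<and>
     D \<notin> gyroline s A C \<and> D \<notin> gyroline s B C"

end

theory Submission
  imports Defs
begin

text \<open>Since \<open>v\<^sub>\<gamma>\<close> is, up to the factor \<open>s/2\<close>, the hyperbolic sine of the distance, this is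
  the hyperbolic Menelaus theorem. Let \<open>h(V)\<close> be the hyperbolic sine of the distance from a
  vertex \<open>V\<close> to \<open>l\<close>. The law of sines in the right triangle formed by \<open>V\<close>, its foot on \<open>l\<close> and
  the point \<open>X\<close> where a side through \<open>V\<close> meets \<open>l\<close> gives \<open>sinh(VX) = h(V) / sin \<theta>\<close>, where \<open>\<theta>\<close>
  is the angle between that side and \<open>l\<close>. Both endpoints of a side share \<open>\<theta>\<close>, so each factor
  of the product is a quotient \<open>h(V) / h(V')\<close> and the product telescopes.

  The computation is done after the left translation by \<open>\<ominus>P\<close>, which turns \<open>l\<close> into a diameter:
  heights are invariant under translations along the diameter, and the remaining discrepancy
  between the frames at \<open>P\<close> and at \<open>X\<close> is a gyration, i.e. a rotation.\<close>

lemma mobius_denom_nonzero: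
  assumes "s > 0" "cmod a < s" "cmod b < s"
  shows "(complex_of_real s)\<^sup>2 + cnj a * b \<noteq> 0"
proof
  assume "(complex_of_real s)\<^sup>2 + cnj a * b = 0"
  then have "cmod (cnj a * b) = s\<^sup>2"
    using assms(1) by (simp add: add_eq_0_iff norm_power)
  moreover have "cmod (cnj a * b) < s * s"
    using assms by (simp add: norm_mult mult_strict_mono')
  ultimately show False by (simp add: power2_eq_square)
qed

lemma mobius_add_altdef:
  assumes "s > 0"
  shows "mobius_add s a b = (a + b) * (complex_of_real s)\<^sup>2 / ((complex_of_real s)\<^sup>2 + cnj a * b)"
  using assms unfolding mobius_add_def by (simp add: field_simps)

lemma mobius_add_mult_denom:
  assumes "s > 0" "cmod a < s" "cmod b < s"
  shows "mobius_add s a b * ((complex_of_real s)\<^sup>2 + cnj a * b) = (a + b) * (complex_of_real s)\<^sup>2"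
  using mobius_denom_nonzero[OF assms] by (simp add: mobius_add_altdef[OF assms(1)])

lemma mobius_add_eq_0_iff:
  assumes "s > 0" "cmod a < s" "cmod b < s"
  shows "mobius_add s a b = 0 \<longleftrightarrow> b = - a"
  using mobius_denom_nonzero[OF assms] assms(1)
  by (auto simp: mobius_add_altdef add_eq_0_iff2)

lemma norm_mobius_denom_identity:
  fixes a b :: complex
  shows "(cmod ((complex_of_real s)\<^sup>2 + cnj a * b))\<^sup>2 - s\<^sup>2 * (cmod (a + b))\<^sup>2
       = (s\<^sup>2 - (cmod a)\<^sup>2) * (s\<^sup>2 - (cmod b)\<^sup>2)"
  unfolding cmod_power2 by (cases a; cases b) (simp add: power2_eq_square algebra_simps)

text \<open>The gamma factor identity \<open>\<gamma>(a \<oplus> b) = \<gamma>(a) \<gamma>(b) |1 + cnj a b / s\<^sup>2|\<close>.\<close>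
lemma mobius_add_norm_defect:
  assumes "s > 0" "cmod a < s" "cmod b < s"
  shows "(s\<^sup>2 - (cmod (mobius_add s a b))\<^sup>2) * (cmod ((complex_of_real s)\<^sup>2 + cnj a * b))\<^sup>2
       = s\<^sup>2 * ((s\<^sup>2 - (cmod a)\<^sup>2) * (s\<^sup>2 - (cmod b)\<^sup>2))"
proof -
  define E where "E = (complex_of_real s)\<^sup>2 + cnj a * b"
  have "E \<noteq> 0" using mobius_denom_nonzero[OF assms] unfolding E_def .
  moreover have "cmod (mobius_add s a b) = cmod (a + b) * s\<^sup>2 / cmod E"
    using assms(1) unfolding E_def by (simp add: mobius_add_altdef norm_mult norm_divide norm_power)
  ultimately have w: "cmod (mobius_add s a b) * cmod E = s\<^sup>2 * cmod (a + b)" by simp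
  have "(s\<^sup>2 - (cmod (mobius_add s a b))\<^sup>2) * (cmod E)\<^sup>2
      = s\<^sup>2 * (cmod E)\<^sup>2 - (cmod (mobius_add s a b) * cmod E)\<^sup>2"
    by (simp add: algebra_simps power2_eq_square)
  also have "\<dots> = s\<^sup>2 * ((cmod E)\<^sup>2 - s\<^sup>2 * (cmod (a + b))\<^sup>2)"
    unfolding w by (simp add: algebra_simps power2_eq_square)
  finally show ?thesis using norm_mobius_denom_identity[of s a b] unfolding E_def by simp
qed

lemma mobius_add_in_disc:
  assumes "s > 0" "cmod a < s" "cmod b < s"
  shows "cmod (mobius_add s a b) < s"
proof -
  have "s\<^sup>2 - (cmod a)\<^sup>2 > 0" "s\<^sup>2 - (cmod b)\<^sup>2 > 0"
    using assms by (simp_all add: power_strict_mono)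
  moreover have "(cmod ((complex_of_real s)\<^sup>2 + cnj a * b))\<^sup>2 > 0"
    using mobius_denom_nonzero[OF assms] by simp
  ultimately have "s\<^sup>2 - (cmod (mobius_add s a b))\<^sup>2 > 0"
    using mobius_add_norm_defect[OF assms] assms(1)
    by (metis mult_pos_pos zero_less_mult_pos2 zero_less_power)
  then show ?thesis using assms(1) by (simp add: power2_less_imp_less)
qed

lemma mobius_add_left_cancel:
  assumes "s > 0" "cmod a < s" "cmod b < s"
  shows "mobius_add s (- a) (mobius_add s a b) = b"
proof -
  define S where "S = (complex_of_real s)\<^sup>2"
  define m where "m = mobius_add s a b"
  have "m * (S + cnj a * b) = (a + b) * S" "S + cnj a * b \<noteq> 0" "S \<noteq> 0"
    using mobius_add_mult_denom[OF assms] mobius_denom_nonzero[OF assms] assms(1)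
    unfolding S_def m_def by simp_all
  then have "b * (S - cnj a * m) = (m - a) * S" by algebra
  moreover have "S - cnj a * m \<noteq> 0"
    using mobius_denom_nonzero[of s "- a" m] mobius_add_in_disc[OF assms] assms
    unfolding S_def m_def by simp
  ultimately show ?thesis
    using assms(1) unfolding m_def[symmetric] S_def
    by (simp add: mobius_add_altdef field_simps)
qed

lemma mobius_add_right_cancel:
  assumes "s > 0" "cmod a < s" "cmod b < s"
  shows "mobius_add s a (mobius_add s (- a) b) = b"
  using mobius_add_left_cancel[of s "- a" b] assms by simp

lemma norm_mobius_add_minus_commute:
  assumes "s > 0"
  shows "cmod (mobius_add s (- a) b) = cmod (mobius_add s (- b) a)"
proof -
  have "cmod ((complex_of_real s)\<^sup>2 - cnj a * b) = cmod (cnj ((complex_of_real s)\<^sup>2 - cnj b * a))"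
    by (simp add: mult.commute)
  then have "cmod ((complex_of_real s)\<^sup>2 - cnj a * b) = cmod ((complex_of_real s)\<^sup>2 - cnj b * a)"
    by (simp only: complex_mod_cnj)
  moreover have "cmod (b - a) = cmod (a - b)" by (rule norm_minus_commute)
  ultimately show ?thesis using assms by (simp add: mobius_add_altdef norm_mult norm_divide)
qed

text \<open>The gyration \<open>gyr[a,b]\<close> of the Moebius gyrogroup is multiplication by this unimodular factor.\<close>
definition gyration_factor :: "real \<Rightarrow> complex \<Rightarrow> complex \<Rightarrow> complex" where
  "gyration_factor s a b =
     ((complex_of_real s)\<^sup>2 + a * cnj b) / ((complex_of_real s)\<^sup>2 + cnj a * b)"

lemma norm_gyration_factor:
  assumes "s > 0" "cmod a < s" "cmod b < s"
  shows "cmod (gyration_factor s a b) = 1"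
proof -
  have "(complex_of_real s)\<^sup>2 + a * cnj b = cnj ((complex_of_real s)\<^sup>2 + cnj a * b)" by simp
  then have "cmod ((complex_of_real s)\<^sup>2 + a * cnj b) = cmod ((complex_of_real s)\<^sup>2 + cnj a * b)"
    by (metis complex_mod_cnj)
  then show ?thesis
    using mobius_denom_nonzero[OF assms] by (simp add: gyration_factor_def norm_divide)
qed

lemma cnj_gyration_factor_mult:
  assumes "s > 0" "cmod a < s" "cmod b < s"
  shows "cnj (gyration_factor s a b) * gyration_factor s a b = 1"
  using norm_gyration_factor[OF assms] complex_norm_square[of "gyration_factor s a b"]
  by (simp add: mult.commute)

lemma mobius_add_left_translate:
  assumes "s > 0" "cmod a < s" "cmod b < s" "cmod c < s"
  shows "mobius_add s (- mobius_add s a b) (mobius_add s a c)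
       = gyration_factor s a b * mobius_add s (- b) c"
proof -
  define S where "S = (complex_of_real s)\<^sup>2"
  define m1 where "m1 = mobius_add s a b"
  define m2 where "m2 = mobius_add s a c"
  define r where "r = mobius_add s (- m1) m2"
  define q where "q = mobius_add s (- b) c"
  have d: "cmod m1 < s" "cmod m2 < s"
    using mobius_add_in_disc assms unfolding m1_def m2_def by auto
  have e1: "m1 * (S + cnj a * b) = (a + b) * S"
    using mobius_add_mult_denom assms unfolding S_def m1_def by blast
  have e2: "m2 * (S + cnj a * c) = (a + c) * S"
    using mobius_add_mult_denom assms unfolding S_def m2_def by blast
  have e3: "cnj m1 * (S + a * cnj b) = (cnj a + cnj b) * S"
    using arg_cong[OF e1, of cnj] unfolding S_def by (simp add: mult.commute)
  have e4: "r * (S - cnj m1 * m2) = (m2 - m1) * S"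
    using mobius_add_mult_denom[of s "- m1" m2] assms d unfolding S_def r_def by simp
  have e5: "q * (S - cnj b * c) = (c - b) * S"
    using mobius_add_mult_denom[of s "- b" c] assms unfolding S_def q_def by simp
  have z: "S + cnj a * b \<noteq> 0" "S + cnj a * c \<noteq> 0" "S - cnj m1 * m2 \<noteq> 0"
    "S - cnj b * c \<noteq> 0" "S \<noteq> 0"
    using mobius_denom_nonzero[of s a b] mobius_denom_nonzero[of s a c]
      mobius_denom_nonzero[of s "- m1" m2] mobius_denom_nonzero[of s "- b" c] assms d
    unfolding S_def by auto
  have "r * (S + cnj a * b) = (S + a * cnj b) * q"
    using e1 e2 e3 e4 e5 z by algebra
  then show ?thesis
    using z(1) unfolding r_def m1_def m2_def q_def S_def gyration_factor_def
    by (simp add: field_simps)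
qed

lemma cnj_mult_self: "cnj z * z = of_real ((cmod z)\<^sup>2)"
  by (metis complex_norm_square mult.commute)

lemma mobius_add_neg_real_multiple:
  assumes "s > 0"
  shows "\<exists>k. mobius_add s (- (of_real c * u)) u = of_real k * u"
proof -
  have "(complex_of_real s)\<^sup>2 + cnj (- (of_real c * u)) * u = of_real (s\<^sup>2 - c * (cmod u)\<^sup>2)"
    by (simp add: cnj_mult_self mult.assoc[symmetric])
  then have "mobius_add s (- (of_real c * u)) u = of_real ((1 - c) * s\<^sup>2 / (s\<^sup>2 - c * (cmod u)\<^sup>2)) * u"
    by (simp add: mobius_add_altdef[OF assms] field_simps)
  then show ?thesis by blast
qed

lemma real_multiple_if_Im_mult_cnj_eq_0:
  assumes "Im (a * cnj b) = 0" "b \<noteq> 0"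
  shows "a = of_real (Re (a * cnj b) / (cmod b)\<^sup>2) * b"
proof -
  have "a * cnj b = of_real (Re (a * cnj b))" using assms(1) by (simp add: complex_eq_iff)
  then have "a * (cnj b * b) = of_real (Re (a * cnj b)) * b"
    by (simp add: mult.assoc[symmetric])
  then have "a * of_real ((cmod b)\<^sup>2) = of_real (Re (a * cnj b)) * b"
    by (simp only: cnj_mult_self)
  then show ?thesis using assms(2) by (simp add: field_simps)
qed

lemma tanh_artanh_real:
  fixes y :: real
  assumes "\<bar>y\<bar> < 1"
  shows "tanh (artanh y) = y"
proof -
  have "(1 + y) / (1 - y) > 0" using assms by auto
  then have "exp (- 2 * artanh y) = 1 / ((1 + y) / (1 - y))"
    unfolding artanh_def by (simp add: exp_minus exp_ln)
  then have e: "exp (- 2 * artanh y) = (1 - y) / (1 + y)" by simp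
  have "1 + y \<noteq> 0" using assms by auto
  then show ?thesis unfolding tanh_real_altdef e by (simp add: field_simps)
qed

lemma mobius_scal_real_multiple: "\<exists>c. mobius_scal s t u = of_real c * u"
  by (cases "u = 0")
    (auto simp: mobius_scal_def intro!: exI[of _ "s * tanh (t * artanh (cmod u / s)) / cmod u"])

lemma mobius_scal_in_disc:
  assumes "s > 0"
  shows "cmod (mobius_scal s t u) < s"
proof (cases "u = 0")
  case False
  have "cmod (mobius_scal s t u) = s * \<bar>tanh (t * artanh (cmod u / s))\<bar>"
    using False assms by (simp add: mobius_scal_def norm_mult norm_divide)
  also have "\<dots> < s * 1"
    using tanh_real_bounds[of "t * artanh (cmod u / s)"] assms
    by (intro mult_strict_left_mono) auto
  finally show ?thesis by simp
qed (use assms in \<open>simp add: mobius_scal_def\<close>)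

lemma mobius_scal_surj_real_multiple:
  assumes "s > 0" "u \<noteq> 0" "cmod u < s" "\<bar>c\<bar> * cmod u < s"
  shows "\<exists>t. mobius_scal s t u = of_real c * u"
proof -
  let ?r = "artanh (cmod u / s)"
  have "tanh ?r = cmod u / s"
    using assms by (intro tanh_artanh_real) (simp add: divide_less_eq)
  then have "?r \<noteq> 0" using assms by auto
  then have "tanh (artanh (c * cmod u / s) / ?r * ?r) = c * cmod u / s"
    using assms by (simp, intro tanh_artanh_real) (simp add: abs_mult divide_less_eq)
  then have "mobius_scal s (artanh (c * cmod u / s) / ?r) u = of_real c * u"
    using assms unfolding mobius_scal_def by (simp add: field_simps)
  then show ?thesis by blast
qed

lemma gyroline_in_disc:
  assumes "s > 0" "cmod A < s" "z \<in> gyroline s A B"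
  shows "cmod z < s"
  using assms mobius_scal_in_disc mobius_add_in_disc unfolding gyroline_def by auto

lemma gyroline_translate_real_multiple:
  assumes "s > 0" "cmod P < s" "z \<in> gyroline s P Q"
  shows "\<exists>c. mobius_add s (- P) z = of_real c * mobius_add s (- P) Q"
proof -
  obtain t where z: "z = mobius_add s P (mobius_scal s t (mobius_add s (- P) Q))"
    using assms(3) unfolding gyroline_def by auto
  then have "mobius_add s (- P) z = mobius_scal s t (mobius_add s (- P) Q)"
    using mobius_add_left_cancel mobius_scal_in_disc assms by blast
  then show ?thesis using mobius_scal_real_multiple by metis
qed

lemma in_gyrolineI:
  assumes "s > 0" "cmod P < s" "cmod Q < s" "cmod z < s" "mobius_add s (- P) Q \<noteq> 0"
    and "Im (cnj (mobius_add s (- P) Q) * mobius_add s (- P) z) = 0"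
  shows "z \<in> gyroline s P Q"
proof -
  define u where "u = mobius_add s (- P) Q"
  define y where "y = mobius_add s (- P) z"
  have d: "cmod u < s" "cmod y < s"
    using mobius_add_in_disc assms unfolding u_def y_def by auto
  have "Im (y * cnj u) = 0" using assms(6) unfolding u_def y_def by (simp add: mult.commute)
  then obtain c where y: "y = of_real c * u"
    using real_multiple_if_Im_mult_cnj_eq_0 assms(5) unfolding u_def by blast
  then have "\<bar>c\<bar> * cmod u < s" using d by (simp add: norm_mult)
  then obtain t where "mobius_scal s t u = y"
    using mobius_scal_surj_real_multiple assms(1,5) d y unfolding u_def by metis
  moreover have "mobius_add s P y = z"
    unfolding y_def using mobius_add_right_cancel assms by blast
  ultimately show ?thesis unfolding gyroline_def u_def by auto
qed

lemma gyroline_parallel: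
  assumes "s > 0" "cmod A < s" "cmod B < s" "X \<in> gyroline s A B"
  shows "Im (mobius_add s (- X) A * cnj (mobius_add s (- X) B)) = 0"
proof -
  define u where "u = mobius_add s (- A) B"
  obtain t where "X = mobius_add s A (mobius_scal s t u)"
    using assms(4) unfolding gyroline_def u_def by auto
  moreover obtain c where c: "mobius_scal s t u = of_real c * u"
    using mobius_scal_real_multiple by blast
  ultimately have X: "X = mobius_add s A (of_real c * u)" by simp
  have d: "cmod (of_real c * u) < s" "cmod u < s"
    using mobius_scal_in_disc[of s t u] c mobius_add_in_disc assms unfolding u_def by auto
  define g where "g = gyration_factor s A (of_real c * u)"
  have "mobius_add s (- X) A = mobius_add s (- X) (mobius_add s A 0)" by (simp add: mobius_add_def)
  also have "\<dots> = g * of_real (- c) * u"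
    using mobius_add_left_translate[of s A "of_real c * u" 0] assms d
    unfolding X g_def by (simp add: mobius_add_def)
  finally have XA: "mobius_add s (- X) A = g * of_real (- c) * u" .
  obtain k where k: "mobius_add s (- (of_real c * u)) u = of_real k * u"
    using mobius_add_neg_real_multiple assms(1) by blast
  have "B = mobius_add s A u" unfolding u_def using mobius_add_right_cancel assms by simp
  then have XB: "mobius_add s (- X) B = g * of_real k * u"
    using mobius_add_left_translate[of s A "of_real c * u" u] assms d k
    unfolding X g_def by (simp add: mult.assoc)
  have "mobius_add s (- X) A * cnj (mobius_add s (- X) B)
      = of_real (- c * k) * (g * cnj g) * (u * cnj u)"
    unfolding XA XB by (simp add: ac_simps)
  also have "\<dots> = of_real (- c * k * (cmod g)\<^sup>2 * (cmod u)\<^sup>2)"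
    by (simp only: complex_norm_square[symmetric] of_real_mult)
  finally show ?thesis by (simp only: Im_complex_of_real)
qed

text \<open>Up to a positive factor depending only on \<open>s\<close> and \<open>u\<close>, this is the hyperbolic sine
  of the distance from \<open>y\<close> to the gyroline through \<open>0\<close> in direction \<open>u\<close>.\<close>
definition line_height :: "real \<Rightarrow> complex \<Rightarrow> complex \<Rightarrow> real" where
  "line_height s u y = \<bar>Im (cnj u * y)\<bar> / (s\<^sup>2 - (cmod y)\<^sup>2)"

definition gyroline_height :: "real \<Rightarrow> complex \<Rightarrow> complex \<Rightarrow> complex \<Rightarrow> real" where
  "gyroline_height s P Q z = line_height s (mobius_add s (- P) Q) (mobius_add s (- P) z)"

lemma Im_cnj_mult_polynomial_identity:
  fixes c s :: real and u y :: complex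
  shows "Im (cnj u * ((y - of_real c * u) * (complex_of_real s)\<^sup>2)
             * cnj ((complex_of_real s)\<^sup>2 - cnj (of_real c * u) * y))
       = s\<^sup>2 * (s\<^sup>2 - (cmod (of_real c * u))\<^sup>2) * Im (cnj u * y)"
  unfolding norm_mult norm_of_real power_mult_distrib cmod_power2
  by (cases u; cases y) (simp add: power2_eq_square algebra_simps)

lemma Im_cnj_mult_mobius_translate_along:
  assumes "s > 0" "cmod (of_real c * u) < s" "cmod y < s"
  shows "Im (cnj u * mobius_add s (- (of_real c * u)) y)
           * (cmod ((complex_of_real s)\<^sup>2 - cnj (of_real c * u) * y))\<^sup>2
       = s\<^sup>2 * (s\<^sup>2 - (cmod (of_real c * u))\<^sup>2) * Im (cnj u * y)"
proof -
  define x where "x = of_real c * u"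
  define E where "E = (complex_of_real s)\<^sup>2 - cnj x * y"
  define w where "w = mobius_add s (- x) y"
  have wE: "w * E = (y - x) * (complex_of_real s)\<^sup>2"
    using mobius_add_mult_denom[of s "- x" y] assms unfolding x_def w_def E_def by simp
  have "Im (cnj u * w) * (cmod E)\<^sup>2 = Im (cnj u * w * of_real ((cmod E)\<^sup>2))" by simp
  also have "\<dots> = Im (cnj u * (w * E) * cnj E)"
    by (simp only: complex_norm_square mult.assoc)
  also have "\<dots> = Im (cnj u * ((y - x) * (complex_of_real s)\<^sup>2) * cnj E)"
    by (simp only: wE)
  also have "\<dots> = s\<^sup>2 * (s\<^sup>2 - (cmod x)\<^sup>2) * Im (cnj u * y)"
    unfolding E_def x_def by (rule Im_cnj_mult_polynomial_identity)
  finally show ?thesis unfolding x_def E_def w_def .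
qed

lemma line_height_mobius_translate_along:
  assumes "s > 0" "cmod (of_real c * u) < s" "cmod y < s"
  shows "line_height s u (mobius_add s (- (of_real c * u)) y) = line_height s u y"
proof -
  define x where "x = of_real c * u"
  define w where "w = mobius_add s (- x) y"
  define E2 where "E2 = (cmod ((complex_of_real s)\<^sup>2 - cnj x * y))\<^sup>2"
  define d where "d = s\<^sup>2 - (cmod x)\<^sup>2"
  define e where "e = s\<^sup>2 - (cmod y)\<^sup>2"
  have "E2 > 0"
    using mobius_denom_nonzero[of s "- x" y] assms unfolding E2_def x_def by simp
  have "d > 0"
    using assms unfolding d_def x_def by (simp add: power_strict_mono)
  have Im: "\<bar>Im (cnj u * w)\<bar> * E2 = s\<^sup>2 * d * \<bar>Im (cnj u * y)\<bar>"
    using arg_cong[OF Im_cnj_mult_mobius_translate_along[OF assms], of abs] \<open>d > 0\<close>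
    unfolding w_def E2_def d_def x_def by (simp add: abs_mult)
  have defect: "(s\<^sup>2 - (cmod w)\<^sup>2) * E2 = s\<^sup>2 * d * e"
    using mobius_add_norm_defect[of s "- x" y] assms
    unfolding w_def E2_def d_def e_def x_def by simp
  have "line_height s u w = \<bar>Im (cnj u * w)\<bar> * E2 / ((s\<^sup>2 - (cmod w)\<^sup>2) * E2)"
    using \<open>E2 > 0\<close> unfolding line_height_def by simp
  also have "\<dots> = \<bar>Im (cnj u * y)\<bar> / e"
    unfolding Im defect using \<open>d > 0\<close> assms(1) by simp
  finally show ?thesis unfolding w_def x_def e_def line_height_def .
qed

text \<open>The law of sines: the right-hand side is \<open>s\<^sup>2 / (|u| |sin \<theta>|)\<close>, where \<open>\<theta>\<close> is the angle
  between \<open>w\<close> and \<open>u\<close>.\<close>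
lemma gamma_len_div_line_height:
  assumes "s > 0" "cmod w < s"
  shows "gamma_len s (cmod w) / line_height s u w = s\<^sup>2 * cmod w / \<bar>Im (cnj u * w)\<bar>"
proof -
  define D where "D = s\<^sup>2 - (cmod w)\<^sup>2"
  have "D > 0" using assms unfolding D_def by (simp add: power_strict_mono)
  then have "gamma_len s (cmod w) = s\<^sup>2 * cmod w / D"
    using assms(1) unfolding gamma_len_def D_def by (simp add: field_simps)
  then show ?thesis
    using \<open>D > 0\<close> unfolding line_height_def D_def[symmetric]
    by (simp add: divide_divide_times_eq)
qed

lemma norm_div_abs_Im_real_multiple:
  assumes "Im (a * cnj b) = 0" "a \<noteq> 0" "b \<noteq> 0"
  shows "cmod a / \<bar>Im (cnj u * a)\<bar> = cmod b / \<bar>Im (cnj u * b)\<bar>"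
proof -
  define k where "k = Re (a * cnj b) / (cmod b)\<^sup>2"
  have a: "a = of_real k * b"
    using real_multiple_if_Im_mult_cnj_eq_0[OF assms(1,3)] unfolding k_def .
  then have "k \<noteq> 0" using assms(2) by auto
  moreover have "Im (cnj u * a) = k * Im (cnj u * b)" unfolding a by (simp add: algebra_simps)
  moreover have "cmod a = \<bar>k\<bar> * cmod b" unfolding a by (simp add: norm_mult)
  ultimately show ?thesis by (simp add: abs_mult)
qed

lemma gamma_len_pos:
  assumes "s > 0" "cmod w < s" "w \<noteq> 0"
  shows "gamma_len s (cmod w) > 0"
proof -
  have "(cmod w)\<^sup>2 < s\<^sup>2" using assms by (simp add: power_strict_mono)
  then show ?thesis using assms unfolding gamma_len_def by simp
qed

lemma gyroline_height_pos:
  assumes "s > 0" "cmod P < s" "cmod Q < s" "cmod z < s" "P \<noteq> Q"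
    and "z \<notin> gyroline s P Q"
  shows "gyroline_height s P Q z > 0"
proof -
  have "mobius_add s (- P) Q \<noteq> 0" using mobius_add_eq_0_iff assms by simp
  then have "Im (cnj (mobius_add s (- P) Q) * mobius_add s (- P) z) \<noteq> 0"
    using in_gyrolineI assms by blast
  moreover have "(cmod (mobius_add s (- P) z))\<^sup>2 < s\<^sup>2"
    using mobius_add_in_disc assms by (simp add: power_strict_mono)
  ultimately show ?thesis unfolding gyroline_height_def line_height_def by simp
qed

text \<open>Translated by \<open>\<ominus>X\<close>, the gyroline through \<open>P\<close> in direction \<open>u\<close> (i.e. through \<open>P\<close> and
  \<open>P \<oplus> u\<close>) becomes the diameter in direction \<open>gyr[P, \<ominus>P \<oplus> X] u\<close>.\<close>
lemma gamma_gyrodist_div_line_height: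
  assumes "s > 0" "cmod P < s" "cmod X < s" "cmod z < s"
    and x: "mobius_add s (- P) X = of_real c * u"
  shows "gamma_len s (gyrodist s z X) / line_height s u (mobius_add s (- P) z)
       = s\<^sup>2 * cmod (mobius_add s (- X) z)
         / \<bar>Im (cnj (gyration_factor s P (mobius_add s (- P) X) * u) * mobius_add s (- X) z)\<bar>"
proof -
  define x where "x = mobius_add s (- P) X"
  define y where "y = mobius_add s (- P) z"
  define w where "w = mobius_add s (- x) y"
  define g where "g = gyration_factor s P x"
  have d: "cmod x < s" "cmod y < s"
    using mobius_add_in_disc assms(1-4) unfolding x_def y_def by auto
  then have dw: "cmod w < s" using mobius_add_in_disc assms(1) unfolding w_def by simp
  have g: "cnj g * g = 1" "cmod g = 1"
    using cnj_gyration_factor_mult norm_gyration_factor assms(1,2) d unfolding g_def by auto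
  have "mobius_add s (- X) z = mobius_add s (- mobius_add s P x) (mobius_add s P y)"
    using mobius_add_right_cancel assms(1-4) unfolding x_def y_def by simp
  also have "\<dots> = g * w"
    using mobius_add_left_translate assms(1,2) d unfolding g_def w_def by blast
  finally have Xz: "mobius_add s (- X) z = g * w" .
  have "gyrodist s z X = cmod w"
    using norm_mobius_add_minus_commute[OF assms(1), of z X] g(2)
    unfolding gyrodist_def Xz by (simp add: norm_mult)
  moreover have "line_height s u y = line_height s u w"
    using line_height_mobius_translate_along[of s c u y] assms(1) d
    unfolding w_def x_def x by simp
  moreover have "cnj (g * u) * (g * w) = (cnj g * g) * (cnj u * w)" by (simp add: ac_simps)
  then have "Im (cnj (g * u) * (g * w)) = Im (cnj u * w)" by (simp only: g(1) mult_1_left)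
  ultimately show ?thesis
    using gamma_len_div_line_height[OF assms(1) dw] g(2)
    unfolding Xz x_def[symmetric] g_def[symmetric] y_def[symmetric] by (simp add: norm_mult)
qed

lemma gamma_gyrodist_ratio_eq_gyroline_height_ratio:
  assumes "s > 0" "cmod P < s" "cmod Q < s" "cmod A < s" "cmod B < s" "P \<noteq> Q"
    and "A \<notin> gyroline s P Q" "B \<notin> gyroline s P Q"
    and "X \<in> gyroline s P Q" "X \<in> gyroline s A B"
  shows "gamma_len s (gyrodist s A X) / gamma_len s (gyrodist s B X)
       = gyroline_height s P Q A / gyroline_height s P Q B"
proof -
  define u where "u = mobius_add s (- P) Q"
  define v where "v = gyration_factor s P (mobius_add s (- P) X) * u"
  have X: "cmod X < s" using gyroline_in_disc assms by blast
  obtain c where c: "mobius_add s (- P) X = of_real c * u"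
    using gyroline_translate_real_multiple assms unfolding u_def by blast
  have "A \<noteq> X" "B \<noteq> X" using assms by auto
  then have nz: "mobius_add s (- X) A \<noteq> 0" "mobius_add s (- X) B \<noteq> 0"
    using mobius_add_eq_0_iff X assms by auto
  have "gamma_len s (gyrodist s A X) / gyroline_height s P Q A
      = s\<^sup>2 * cmod (mobius_add s (- X) A) / \<bar>Im (cnj v * mobius_add s (- X) A)\<bar>"
    using gamma_gyrodist_div_line_height[OF assms(1,2) X assms(4) c]
    unfolding gyroline_height_def u_def v_def .
  also have "\<dots> = s\<^sup>2 * cmod (mobius_add s (- X) B) / \<bar>Im (cnj v * mobius_add s (- X) B)\<bar>"
    using norm_div_abs_Im_real_multiple[OF gyroline_parallel[OF assms(1,4,5,10)] nz, of v]
    by (metis times_divide_eq_right)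
  also have "\<dots> = gamma_len s (gyrodist s B X) / gyroline_height s P Q B"
    using gamma_gyrodist_div_line_height[OF assms(1,2) X assms(5) c]
    unfolding gyroline_height_def u_def v_def by simp
  finally have eq: "gamma_len s (gyrodist s A X) / gyroline_height s P Q A
      = gamma_len s (gyrodist s B X) / gyroline_height s P Q B" .
  have "gamma_len s (gyrodist s B X) > 0"
    using gamma_len_pos[OF assms(1)] mobius_add_in_disc nz(2) X assms
      norm_mobius_add_minus_commute[OF assms(1), of B X]
    unfolding gyrodist_def by simp
  moreover have "gyroline_height s P Q A > 0" "gyroline_height s P Q B > 0"
    using gyroline_height_pos assms by auto
  ultimately show ?thesis using eq by (simp add: field_simps)
qed

theorem theorem3:
  fixes s :: real and A B C D P Q X Y Z W :: complex
  assumes "s > 0"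
    and "gyroquadrilateral s A B C D"
    and "P \<in> disc s" "Q \<in> disc s" "P \<noteq> Q"
    and "A \<notin> gyroline s P Q" "B \<notin> gyroline s P Q"
    and "C \<notin> gyroline s P Q" "D \<notin> gyroline s P Q"
    and "X \<in> gyroline s P Q" "X \<in> gyroline s A B"
    and "Y \<in> gyroline s P Q" "Y \<in> gyroline s B C"
    and "Z \<in> gyroline s P Q" "Z \<in> gyroline s C D"
    and "W \<in> gyroline s P Q" "W \<in> gyroline s D A"
  shows "gamma_len s (gyrodist s A X) / gamma_len s (gyrodist s B X) *
         (gamma_len s (gyrodist s B Y) / gamma_len s (gyrodist s C Y)) *
         (gamma_len s (gyrodist s C Z) / gamma_len s (gyrodist s D Z)) *
         (gamma_len s (gyrodist s D W) / gamma_len s (gyrodist s A W)) = 1"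
proof -
  have disc: "cmod A < s" "cmod B < s" "cmod C < s" "cmod D < s" "cmod P < s" "cmod Q < s"
    using assms(2-4) unfolding gyroquadrilateral_def disc_def by auto
  note side = gamma_gyrodist_ratio_eq_gyroline_height_ratio[OF assms(1) disc(5,6)]
  let ?h = "gyroline_height s P Q"
  have "?h A > 0" "?h B > 0" "?h C > 0" "?h D > 0"
    using gyroline_height_pos[OF assms(1) disc(5,6)] disc assms(5-9) by auto
  then show ?thesis
    unfolding side[OF disc(1,2) assms(5,6,7,10,11)] side[OF disc(2,3) assms(5,7,8,12,13)]
      side[OF disc(3,4) assms(5,8,9,14,15)] side[OF disc(4,1) assms(5,9,6,16,17)]
    by simp
qed

end
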